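(* Let $G=([N],E)$ be a graph with anti-ferromagnetic Ising potentials (parameters $\beta>0$, $B\in\mathbb{R}$), and let $e=(i,k)$ be an edge with $i,k\in[N]$, added with the Ising edge potential; $G+e$ denotes the resulting graph. Then $$H(G+e)=\begin{cases}H(G)+\beta,& \text{if } i\not\stackrel{0}{\sim}k;\\ H_{m+1}+\beta,&\text{if } i\stackrel{m}{\sim}k \text{ but } i\not\stackrel{m+1}{\sim}k \text{ for some } m\le M-1;\\ H(G)-\beta,&\text{if } i\stackrel{m}{\sim}k \text{ for all } m\le M.\end{cases}$$
   Context: Anti-ferromagnetic Ising model: $\chi=\{0,1\}$, node potentials $H_i(0)=-B$, $H_i(1)=B$, edge potentials $H_e(x,y)=-\beta$ if $x=y$ and $\beta$ if $x\ne y$; $H(x)=\sum_iH_i(x_i)+\sum_{e\in E}H_e(x_e)$ for $x\in\{0,1\}^N$, $H(G)=\max_xH(x)$. Let $H_0=H(G)$ and, recursively, $H_m=\max\{H(x):H(x)<H_{m-1}\}$, so $H_0>H_1>\cdots$ are the distinct values of $H(x)$ over $x\in\{0,1\}^N$ in decreasing order. Let $M$ be the largest index $m$ with $H_m\ge H(G)-2\beta$ (if all values satisfy this, $M$ is the index of the smallest value). Let $\mathcal{C}_m=\{x:H(x)=H_m\}$. For $m\le M$, write $i\stackrel{m}{\sim}k$ iff $x_i=x_k$ for all $x\in\mathcal{C}_0\cup\dots\cup\mathcal{C}_m$. *)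

theory Defs
  imports Complex_Main
begin

text \<open>Vertices are 0,...,N-1; a configuration assigns a spin in {0,1} to every vertex
  (and 0 outside the vertex set, so that the configuration set is finite).
  Edges are two-element sets {i,k}.\<close>

definition configs :: "nat \<Rightarrow> (nat \<Rightarrow> nat) set" where
  "configs N = {x. (\<forall>i<N. x i \<in> {0,1}) \<and> (\<forall>i\<ge>N. x i = 0)}"

definition wf_graph :: "nat \<Rightarrow> nat set set \<Rightarrow> bool" where
  "wf_graph N E \<longleftrightarrow> (\<forall>e\<in>E. \<exists>i k. e = {i,k} \<and> i \<noteq> k \<and> i < N \<and> k < N)"

definition Hnode :: "real \<Rightarrow> nat \<Rightarrow> real" where
  "Hnode B v = (if v = 0 then - B else B)"

definition Hedge :: "real \<Rightarrow> (nat \<Rightarrow> nat) \<Rightarrow> nat set \<Rightarrow> real" where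
  "Hedge \<beta> x e = (if (\<forall>a\<in>e. \<forall>b\<in>e. x a = x b) then - \<beta> else \<beta>)"

definition Ham :: "nat \<Rightarrow> nat set set \<Rightarrow> real \<Rightarrow> real \<Rightarrow> (nat \<Rightarrow> nat) \<Rightarrow> real" where
  "Ham N E B \<beta> x = (\<Sum>i<N. Hnode B (x i)) + (\<Sum>e\<in>E. Hedge \<beta> x e)"

definition HG :: "nat \<Rightarrow> nat set set \<Rightarrow> real \<Rightarrow> real \<Rightarrow> real" where
  "HG N E B \<beta> = Max (Ham N E B \<beta> ` configs N)"

primrec Hlev :: "nat \<Rightarrow> nat set set \<Rightarrow> real \<Rightarrow> real \<Rightarrow> nat \<Rightarrow> real" where
  "Hlev N E B \<beta> 0 = HG N E B \<beta>"
| "Hlev N E B \<beta> (Suc m) =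
     Max {v \<in> Ham N E B \<beta> ` configs N. v < Hlev N E B \<beta> m}"

definition Midx :: "nat \<Rightarrow> nat set set \<Rightarrow> real \<Rightarrow> real \<Rightarrow> nat" where
  "Midx N E B \<beta> = Max {m. m < card (Ham N E B \<beta> ` configs N) \<and>
                          Hlev N E B \<beta> m \<ge> HG N E B \<beta> - 2 * \<beta>}"

definition Cset :: "nat \<Rightarrow> nat set set \<Rightarrow> real \<Rightarrow> real \<Rightarrow> nat \<Rightarrow> (nat \<Rightarrow> nat) set" where
  "Cset N E B \<beta> m = {x \<in> configs N. Ham N E B \<beta> x = Hlev N E B \<beta> m}"

definition msim :: "nat \<Rightarrow> nat set set \<Rightarrow> real \<Rightarrow> real \<Rightarrow> nat \<Rightarrow> nat \<Rightarrow> nat \<Rightarrow> bool" where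
  "msim N E B \<beta> m i k \<longleftrightarrow> (\<forall>x \<in> (\<Union>j\<le>m. Cset N E B \<beta> j). x i = x k)"

end

theory Submission
  imports Defs
begin

text \<open>Adding the edge \<open>{i,k}\<close> adds \<open>-\<beta>\<close> to the energy of every configuration with
  \<open>x i = x k\<close> and \<open>+\<beta>\<close> to every other one. The new maximum is therefore attained
  either at the best configuration separating \<open>i\<close> and \<open>k\<close>, with value \<open>H\<^sub>m\<^sub>+\<^sub>1 + \<beta>\<close> for the
  first level \<open>H\<^sub>m\<^sub>+\<^sub>1\<close> containing such a configuration, or at a ground state of \<open>G\<close>,
  with value \<open>H(G) - \<beta>\<close>; the first wins exactly when \<open>H\<^sub>m\<^sub>+\<^sub>1 \<ge> H(G) - 2\<beta>\<close>, i.e. when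
  \<open>m + 1 \<le> M\<close>.\<close>

locale decreasing_enum =
  fixes V :: "'a::linorder set" and h :: "nat \<Rightarrow> 'a"
  assumes finite_V: "finite V" and V_nonempty: "V \<noteq> {}"
    and h_0: "h 0 = Max V"
    and h_Suc: "\<And>m. h (Suc m) = Max {v \<in> V. v < h m}"
begin

lemma upper_set:
  assumes "m < card V"
  shows "h m \<in> V \<and> {v \<in> V. h m \<le> v} = h ` {..m} \<and> card (h ` {..m}) = Suc m"
  using assms
proof (induction m)
  case 0
  have "{v \<in> V. Max V \<le> v} = {Max V}"
    using finite_V V_nonempty by (force intro: antisym Max_ge Max_in)
  then show ?case using finite_V V_nonempty by (simp add: h_0)
next
  case (Suc m)
  then have IH: "h m \<in> V" "{v \<in> V. h m \<le> v} = h ` {..m}" "card (h ` {..m}) = Suc m"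
    by auto
  define S where "S = {v \<in> V. v < h m}"
  have "S = V - {v \<in> V. h m \<le> v}" unfolding S_def by auto
  also have "card \<dots> = card V - Suc m"
    using IH finite_V by (subst card_Diff_subset) auto
  finally have "card S = card V - Suc m" .
  with Suc.prems have "S \<noteq> {}" by auto
  moreover have "finite S" unfolding S_def using finite_V by simp
  ultimately have max_S: "h (Suc m) \<in> S" "\<And>v. v \<in> S \<Longrightarrow> v \<le> h (Suc m)"
    by (simp_all add: h_Suc S_def[symmetric])
  have "{v \<in> V. h (Suc m) \<le> v} = insert (h (Suc m)) {v \<in> V. h m \<le> v}"
    using max_S unfolding S_def by (force simp: not_less)
  moreover have "h (Suc m) \<notin> h ` {..m}"
    using max_S(1) unfolding S_def IH(2)[symmetric] by auto
  ultimately show ?case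
    using max_S(1) IH by (simp add: S_def atMost_Suc)
qed

lemma h_in_V: "m < card V \<Longrightarrow> h m \<in> V"
  using upper_set by blast

lemma h_antimono:
  assumes "j \<le> m" "m < card V"
  shows "h m \<le> h j"
  using upper_set[OF assms(2)] assms(1) by blast

lemma le_h_0: "v \<in> V \<Longrightarrow> v \<le> h 0"
  using finite_V by (simp add: h_0)

lemma le_h_Suc:
  assumes "v \<in> V" "v < h m"
  shows "v \<le> h (Suc m)"
  using assms finite_V by (simp add: h_Suc)

lemma h_last_le:
  assumes "card V = Suc m" "v \<in> V"
  shows "h m \<le> v"
proof -
  have "{v \<in> V. h m \<le> v} = V"
    using upper_set[of m] assms finite_V by (intro card_subset_eq) auto
  then show ?thesis using assms(2) by blast
qed

end

interpretation Hlev: decreasing_enum "Ham N E B \<beta> ` configs N" "Hlev N E B \<beta>"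
  for N E B \<beta>
proof
  have "configs N \<subseteq> {x. \<forall>i. (i \<in> {..<N} \<longrightarrow> x i \<in> {0,1}) \<and> (i \<notin> {..<N} \<longrightarrow> x i = 0)}"
    unfolding configs_def by auto
  then show "finite (Ham N E B \<beta> ` configs N)"
    by (blast intro: finite_imageI finite_subset finite_set_of_finite_funs)
  show "Ham N E B \<beta> ` configs N \<noteq> {}"
    by (auto simp: configs_def)
qed (simp_all add: HG_def)

lemma Ham_le_HG: "x \<in> configs N \<Longrightarrow> Ham N E B \<beta> x \<le> HG N E B \<beta>"
  using Hlev.le_h_0 by simp

lemma HG_attained: "\<exists>x \<in> configs N. Ham N E B \<beta> x = HG N E B \<beta>"
proof -
  have "0 < card (Ham N E B \<beta> ` configs N)"
    using Hlev.finite_V Hlev.V_nonempty by (simp add: card_gt_0_iff)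
  then show ?thesis using Hlev.h_in_V[of 0 N E B \<beta>] by auto
qed

lemma msim_iff:
  assumes "m < card (Ham N E B \<beta> ` configs N)"
  shows "msim N E B \<beta> m i k \<longleftrightarrow>
    (\<forall>x \<in> configs N. Hlev N E B \<beta> m \<le> Ham N E B \<beta> x \<longrightarrow> x i = x k)"
proof -
  have "(\<Union>j\<le>m. Cset N E B \<beta> j) = {x \<in> configs N. Hlev N E B \<beta> m \<le> Ham N E B \<beta> x}"
    using Hlev.upper_set[OF assms] Hlev.h_antimono[OF _ assms]
    by (auto simp: Cset_def)
  then show ?thesis by (auto simp: msim_def)
qed

lemma
  fixes N :: nat and E :: "nat set set" and B \<beta> :: real
  assumes "\<beta> \<ge> 0"
  shows Midx_lt_card: "Midx N E B \<beta> < card (Ham N E B \<beta> ` configs N)"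
    and Hlev_Midx_ge: "HG N E B \<beta> - 2 * \<beta> \<le> Hlev N E B \<beta> (Midx N E B \<beta>)"
    and Midx_maximal: "\<lbrakk>m < card (Ham N E B \<beta> ` configs N); HG N E B \<beta> - 2 * \<beta> \<le> Hlev N E B \<beta> m\<rbrakk>
      \<Longrightarrow> m \<le> Midx N E B \<beta>"
proof -
  define S where
    "S = {m. m < card (Ham N E B \<beta> ` configs N) \<and> HG N E B \<beta> - 2 * \<beta> \<le> Hlev N E B \<beta> m}"
  have Midx_S: "Midx N E B \<beta> = Max S"
    by (simp add: Midx_def S_def)
  have "finite S" by (simp add: S_def)
  moreover have "0 \<in> S"
    using assms Hlev.finite_V Hlev.V_nonempty by (simp add: S_def card_gt_0_iff)
  ultimately have "Midx N E B \<beta> \<in> S" "\<And>m. m \<in> S \<Longrightarrow> m \<le> Midx N E B \<beta>"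
    unfolding Midx_S by (auto intro: Max_in)
  then show "Midx N E B \<beta> < card (Ham N E B \<beta> ` configs N)"
    and "HG N E B \<beta> - 2 * \<beta> \<le> Hlev N E B \<beta> (Midx N E B \<beta>)"
    and "\<lbrakk>m < card (Ham N E B \<beta> ` configs N); HG N E B \<beta> - 2 * \<beta> \<le> Hlev N E B \<beta> m\<rbrakk>
      \<Longrightarrow> m \<le> Midx N E B \<beta>" by (auto simp: S_def)
qed

text \<open>Either level \<open>M + 1\<close> exists and lies below \<open>H(G) - 2\<beta>\<close> by maximality of \<open>M\<close>,
  or \<open>M\<close> is the last level and nothing lies below it.\<close>
lemma Ham_below_Midx:
  assumes "\<beta> \<ge> 0" "x \<in> configs N" "Ham N E B \<beta> x < Hlev N E B \<beta> (Midx N E B \<beta>)"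
  shows "Ham N E B \<beta> x < HG N E B \<beta> - 2 * \<beta>"
proof (cases "Suc (Midx N E B \<beta>) < card (Ham N E B \<beta> ` configs N)")
  case True
  then have "Hlev N E B \<beta> (Suc (Midx N E B \<beta>)) < HG N E B \<beta> - 2 * \<beta>"
    using Midx_maximal[OF assms(1) True] by (meson Suc_n_not_le_n not_le)
  moreover have "Ham N E B \<beta> x \<le> Hlev N E B \<beta> (Suc (Midx N E B \<beta>))"
    by (rule Hlev.le_h_Suc[OF imageI[OF assms(2)] assms(3)])
  ultimately show ?thesis by linarith
next
  case False
  then have "card (Ham N E B \<beta> ` configs N) = Suc (Midx N E B \<beta>)"
    using Midx_lt_card[OF assms(1), of N E B] by simp
  then have "Hlev N E B \<beta> (Midx N E B \<beta>) \<le> Ham N E B \<beta> x"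
    by (rule Hlev.h_last_le[OF _ imageI[OF assms(2)]])
  with assms(3) show ?thesis by simp
qed

lemma wf_graph_finite: "wf_graph N E \<Longrightarrow> finite E"
  unfolding wf_graph_def by (rule finite_subset[of _ "Pow {..<N}"]) auto

lemma Ham_insert_edge:
  assumes "wf_graph N E" "{i,k} \<notin> E"
  shows "Ham N (insert {i,k} E) B \<beta> x = Ham N E B \<beta> x + (if x i = x k then - \<beta> else \<beta>)"
proof -
  have "finite E" using assms(1) by (rule wf_graph_finite)
  moreover have "Hedge \<beta> x {i,k} = (if x i = x k then - \<beta> else \<beta>)"
    unfolding Hedge_def by auto
  ultimately show ?thesis
    using assms(2) by (simp add: Ham_def)
qed

lemma HG_eqI:
  assumes "x \<in> configs N" "Ham N E B \<beta> x = c" "\<And>y. y \<in> configs N \<Longrightarrow> Ham N E B \<beta> y \<le> c"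
  shows "HG N E B \<beta> = c"
  unfolding HG_def using assms Hlev.finite_V by (intro Max_eqI) auto

context
  fixes N :: nat and E :: "nat set set" and B \<beta> :: real and i k :: nat
  assumes wf: "wf_graph N E" and new_edge: "{i,k} \<notin> E" and \<beta>_nonneg: "\<beta> \<ge> 0"
begin

lemma HG_insert_edge_split_ground_state:
  assumes "\<not> msim N E B \<beta> 0 i k"
  shows "HG N (insert {i,k} E) B \<beta> = HG N E B \<beta> + \<beta>"
proof -
  obtain x where x: "x \<in> configs N" "HG N E B \<beta> \<le> Ham N E B \<beta> x" "x i \<noteq> x k"
    using assms msim_iff[of 0] Hlev.finite_V Hlev.V_nonempty by (auto simp: card_gt_0_iff)
  show ?thesis
  proof (rule HG_eqI[OF x(1)])
    show "Ham N (insert {i,k} E) B \<beta> x = HG N E B \<beta> + \<beta>"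
      using x Ham_le_HG[OF x(1), of E B \<beta>] by (simp add: Ham_insert_edge[OF wf new_edge])
    show "Ham N (insert {i,k} E) B \<beta> y \<le> HG N E B \<beta> + \<beta>" if "y \<in> configs N" for y
      using Ham_le_HG[OF that, of E B \<beta>] \<beta>_nonneg by (simp add: Ham_insert_edge[OF wf new_edge])
  qed
qed

lemma HG_insert_edge_split_level:
  assumes "m + 1 \<le> Midx N E B \<beta>" "msim N E B \<beta> m i k" "\<not> msim N E B \<beta> (m + 1) i k"
  shows "HG N (insert {i,k} E) B \<beta> = Hlev N E B \<beta> (m + 1) + \<beta>"
proof -
  have m_lt: "Suc m < card (Ham N E B \<beta> ` configs N)"
    using assms(1) Midx_lt_card[OF \<beta>_nonneg, of N E B] by simp
  have split_below: "Ham N E B \<beta> y \<le> Hlev N E B \<beta> (Suc m)"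
    if "y \<in> configs N" "y i \<noteq> y k" for y
  proof -
    have "Ham N E B \<beta> y < Hlev N E B \<beta> m"
      using assms(2) that msim_iff[of m] m_lt by force
    then show ?thesis using that(1) by (intro Hlev.le_h_Suc) auto
  qed
  obtain x where x: "x \<in> configs N" "Hlev N E B \<beta> (Suc m) \<le> Ham N E B \<beta> x" "x i \<noteq> x k"
    using assms(3) msim_iff[OF m_lt] by auto
  have "HG N E B \<beta> - 2 * \<beta> \<le> Hlev N E B \<beta> (Suc m)"
    using Hlev_Midx_ge[OF \<beta>_nonneg, of N E B]
      Hlev.h_antimono[OF assms(1) Midx_lt_card[OF \<beta>_nonneg, of N E B]]
    by simp
  show ?thesis
  proof (rule HG_eqI[OF x(1)])
    show "Ham N (insert {i,k} E) B \<beta> x = Hlev N E B \<beta> (m + 1) + \<beta>"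
      using x split_below[OF x(1,3)] by (simp add: Ham_insert_edge[OF wf new_edge])
    show "Ham N (insert {i,k} E) B \<beta> y \<le> Hlev N E B \<beta> (m + 1) + \<beta>" if "y \<in> configs N" for y
      using Ham_le_HG[OF that, of E B \<beta>] split_below[OF that] \<open>HG N E B \<beta> - 2 * \<beta> \<le> _\<close>
      by (auto simp: Ham_insert_edge[OF wf new_edge])
  qed
qed

lemma HG_insert_edge_no_split:
  assumes "\<forall>m \<le> Midx N E B \<beta>. msim N E B \<beta> m i k"
  shows "HG N (insert {i,k} E) B \<beta> = HG N E B \<beta> - \<beta>"
proof -
  have split_below: "Ham N E B \<beta> y < HG N E B \<beta> - 2 * \<beta>"
    if "y \<in> configs N" "y i \<noteq> y k" for y
  proof (rule Ham_below_Midx[OF \<beta>_nonneg that(1)])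
    show "Ham N E B \<beta> y < Hlev N E B \<beta> (Midx N E B \<beta>)"
      using assms that msim_iff[OF Midx_lt_card[OF \<beta>_nonneg, of N E B]] by force
  qed
  obtain x where x: "x \<in> configs N" "Ham N E B \<beta> x = HG N E B \<beta>"
    using HG_attained by blast
  have "x i = x k"
    using split_below[OF x(1)] x(2) \<beta>_nonneg by force
  show ?thesis
  proof (rule HG_eqI[OF x(1)])
    show "Ham N (insert {i,k} E) B \<beta> x = HG N E B \<beta> - \<beta>"
      using x \<open>x i = x k\<close> by (simp add: Ham_insert_edge[OF wf new_edge])
    show "Ham N (insert {i,k} E) B \<beta> y \<le> HG N E B \<beta> - \<beta>" if "y \<in> configs N" for y
      using Ham_le_HG[OF that, of E B \<beta>] split_below[OF that]
      by (auto simp: Ham_insert_edge[OF wf new_edge])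
  qed
qed

end

theorem lemma1:
  fixes N :: nat and E :: "nat set set" and B \<beta> :: real and i k :: nat
  assumes "\<beta> > 0"
    and "wf_graph N E"
    and "i < N" and "k < N" and "i \<noteq> k"
    and "{i, k} \<notin> E"
  shows "(\<not> msim N E B \<beta> 0 i k \<longrightarrow> HG N (insert {i,k} E) B \<beta> = HG N E B \<beta> + \<beta>)
       \<and> (\<forall>m. m + 1 \<le> Midx N E B \<beta> \<and> msim N E B \<beta> m i k \<and> \<not> msim N E B \<beta> (m + 1) i k
              \<longrightarrow> HG N (insert {i,k} E) B \<beta> = Hlev N E B \<beta> (m + 1) + \<beta>)
       \<and> ((\<forall>m \<le> Midx N E B \<beta>. msim N E B \<beta> m i k)
              \<longrightarrow> HG N (insert {i,k} E) B \<beta> = HG N E B \<beta> - \<beta>)"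
  using HG_insert_edge_split_ground_state HG_insert_edge_split_level HG_insert_edge_no_split
    assms(1,2,6) by (simp add: less_imp_le)

end
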